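(* Let $Z\subseteq\{0,1\}^n$ and let $\bm e_i$ be the $i$-th standard basis vector of $\mathbb R^n$, for some $i\in\{1,\dots,n\}$. Then $$P(\bm e_i)=\{(\bm x,\bm z)\in\mathbb R^n\times\operatorname{conv}(Z):\ |x_i|\le z_i\}.$$
   Context: For $\bm\alpha\in\mathbb R^n$, $P_0(\bm\alpha)=\{(\bm x,\bm z)\in\mathbb R^n\times Z:\ \sum_{j=1}^n|\alpha_jx_j|\le\sqrt{\sum_{j=1}^n\alpha_j^2z_j}\}$ and $P(\bm\alpha)=\operatorname{conv}(P_0(\bm\alpha))$, the convex hull. *)

theory Defs
  imports "HOL-Analysis.Analysis"
begin

definition P0 :: "(real^'n::finite) \<Rightarrow> (real^'n) set \<Rightarrow> ((real^'n) \<times> (real^'n)) set" where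
  "P0 \<alpha> Z = {(x, z). z \<in> Z \<and>
      (\<Sum>j\<in>UNIV. \<bar>\<alpha>$j * x$j\<bar>) \<le> sqrt (\<Sum>j\<in>UNIV. (\<alpha>$j)\<^sup>2 * z$j)}"

definition P :: "(real^'n::finite) \<Rightarrow> (real^'n) set \<Rightarrow> ((real^'n) \<times> (real^'n)) set" where
  "P \<alpha> Z = convex hull (P0 \<alpha> Z)"

end

theory Submission
  imports Defs
begin

text \<open>For 0/1 points the defining inequality of \<open>P\<^sub>0(e\<^sub>i)\<close> reads \<open>|x\<^sub>i| \<le> \<surd>z\<^sub>i = z\<^sub>i\<close>, and the set
  \<open>{(x, z). z \<in> conv Z, |x\<^sub>i| \<le> z\<^sub>i}\<close> is convex, giving one inclusion. Conversely, given such
  \<open>(x, z)\<close>, put \<open>t = x\<^sub>i / z\<^sub>i\<close> (so \<open>|t| \<le> 1\<close>): the affine map \<open>w \<mapsto> (c + t w\<^sub>i e\<^sub>i, w)\<close>, with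
  \<open>c\<close> the vector \<open>x\<close> with its \<open>i\<close>-th entry zeroed, sends \<open>Z\<close> into \<open>P\<^sub>0(e\<^sub>i)\<close> and \<open>z\<close> to \<open>(x, z)\<close>,
  so \<open>(x, z)\<close> lies in the convex hull of \<open>P\<^sub>0(e\<^sub>i)\<close>.\<close>

lemma sum_axis_mult:
  fixes f :: "'n::finite \<Rightarrow> real"
  shows "(\<Sum>j\<in>UNIV. g (axis i (1::real) $ j) * f j) = g 1 * f i + (\<Sum>j\<in>UNIV - {i}. g 0 * f j)"
  by (simp add: sum.remove[of UNIV i] axis_def)

lemma P0_axis:
  fixes Z :: "(real^'n) set"
  assumes "Z \<subseteq> {z. \<forall>j. z$j \<in> {0, 1}}"
  shows "P0 (axis i 1) Z = {(x, z). z \<in> Z \<and> \<bar>x$i\<bar> \<le> z$i}"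
proof -
  have lhs: "(\<Sum>j\<in>UNIV. \<bar>axis i 1 $ j * x$j\<bar>) = \<bar>x$i\<bar>" for x :: "real^'n"
    using sum_axis_mult[of "\<lambda>a. \<bar>a\<bar>" i "\<lambda>j. \<bar>x$j\<bar>"] by (simp add: abs_mult)
  have rhs: "(\<Sum>j\<in>UNIV. (axis i 1 $ j)\<^sup>2 * z$j) = z$i" for z :: "real^'n"
    using sum_axis_mult[of "\<lambda>a. a\<^sup>2" i "\<lambda>j. z$j"] by simp
  have "sqrt (z$i) = z$i" if "z \<in> Z" for z
  proof -
    have "z$i = 0 \<or> z$i = 1" using assms that by auto
    then show ?thesis by auto
  qed
  then show ?thesis
    unfolding P0_def lhs rhs by auto
qed

lemma convex_abs_component_le:
  fixes C :: "(real^'n) set"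
  assumes "convex C"
  shows "convex {(x, z). z \<in> C \<and> \<bar>x$i\<bar> \<le> z$i}"
proof (rule convexI)
  fix p q :: "(real^'n) \<times> (real^'n)" and u v :: real
  assume "p \<in> {(x, z). z \<in> C \<and> \<bar>x$i\<bar> \<le> z$i}" "q \<in> {(x, z). z \<in> C \<and> \<bar>x$i\<bar> \<le> z$i}"
    and uv: "0 \<le> u" "0 \<le> v" "u + v = 1"
  then obtain x z x' z' where pq: "p = (x, z)" "q = (x', z')"
    and "z \<in> C" "\<bar>x$i\<bar> \<le> z$i" "z' \<in> C" "\<bar>x'$i\<bar> \<le> z'$i"
    by auto
  have "\<bar>u * x$i + v * x'$i\<bar> \<le> u * \<bar>x$i\<bar> + v * \<bar>x'$i\<bar>"
    using uv abs_triangle_ineq[of "u * x$i" "v * x'$i"] by (simp add: abs_mult)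
  also have "\<dots> \<le> u * z$i + v * z'$i"
    using \<open>\<bar>x$i\<bar> \<le> z$i\<close> \<open>\<bar>x'$i\<bar> \<le> z'$i\<close> uv by (intro add_mono mult_left_mono)
  finally show "u *\<^sub>R p + v *\<^sub>R q \<in> {(x, z). z \<in> C \<and> \<bar>x$i\<bar> \<le> z$i}"
    using pq uv \<open>z \<in> C\<close> \<open>z' \<in> C\<close> convexD[OF assms] by auto
qed

lemma affine_image_mem_convex_hull:
  assumes "linear f" "(\<lambda>w. a + f w) ` Z \<subseteq> S" "z \<in> convex hull Z"
  shows "a + f z \<in> convex hull S"
proof -
  have "a + f z \<in> (\<lambda>y. a + y) ` (f ` (convex hull Z))"
    using assms(3) by blast
  also have "\<dots> = convex hull ((\<lambda>w. a + f w) ` Z)"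
    by (simp add: convex_hull_linear_image[OF assms(1)] convex_hull_translation[symmetric] image_image)
  also have "\<dots> \<subseteq> convex hull S"
    using assms(2) by (rule hull_mono)
  finally show ?thesis .
qed

lemma mem_P_axis:
  fixes Z :: "(real^'n) set"
  assumes Z01: "Z \<subseteq> {z. \<forall>j. z$j \<in> {0, 1}}"
    and z: "z \<in> convex hull Z" and xz: "\<bar>x$i\<bar> \<le> z$i"
  shows "(x, z) \<in> P (axis i 1) Z"
proof -
  define t where "t = x$i / z$i"
  define c :: "real^'n" where "c = (\<chi> j. if j = i then 0 else x$j)"
  define f where "f = (\<lambda>w::real^'n. ((t * w$i) *\<^sub>R axis i (1::real), w))"
  have "linear f"
    unfolding f_def by (intro linearI) (auto simp: algebra_simps)
  have "\<bar>t\<bar> \<le> 1"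
    using xz by (cases "z$i = 0") (auto simp: t_def abs_divide divide_le_eq)
  have "(\<lambda>w. (c, 0) + f w) ` Z \<subseteq> P0 (axis i 1) Z"
  proof (rule image_subsetI)
    fix w assume "w \<in> Z"
    then have "w$i = 0 \<or> w$i = 1"
      using Z01 by auto
    then have "\<bar>t * w$i\<bar> \<le> w$i"
      using \<open>\<bar>t\<bar> \<le> 1\<close> by auto
    then show "(c, 0) + f w \<in> P0 (axis i 1) Z"
      unfolding P0_axis[OF Z01] using \<open>w \<in> Z\<close> by (simp add: f_def c_def axis_def)
  qed
  then have "(c, 0) + f z \<in> P (axis i 1) Z"
    unfolding P_def by (rule affine_image_mem_convex_hull[OF \<open>linear f\<close> _ z])
  moreover have "(c, 0) + f z = (x, z)"
  proof -
    have "t * z$i = x$i"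
      using xz by (cases "z$i = 0") (auto simp: t_def)
    then show ?thesis
      by (auto simp: f_def c_def axis_def vec_eq_iff)
  qed
  ultimately show ?thesis by simp
qed

theorem mainTheorem6:
  fixes Z :: "(real^'n) set" and i :: 'n
  assumes "Z \<subseteq> {z. \<forall>j. z$j \<in> {0, 1}}"
  shows "P (axis i 1) Z = {(x, z). z \<in> convex hull Z \<and> \<bar>x$i\<bar> \<le> z$i}"
proof
  show "P (axis i 1) Z \<subseteq> {(x, z). z \<in> convex hull Z \<and> \<bar>x$i\<bar> \<le> z$i}"
    unfolding P_def P0_axis[OF assms]
    by (rule hull_minimal) (auto intro: hull_inc convex_abs_component_le)
  show "{(x, z). z \<in> convex hull Z \<and> \<bar>x$i\<bar> \<le> z$i} \<subseteq> P (axis i 1) Z"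
    using mem_P_axis[OF assms] by auto
qed

end
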